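(* Let $X$ be a set and $\tau$ a topology on $I(X)$ such that $(I(X),\tau)$ is a $T_1$ topological semigroup. Then: (i) each $v(x,y)$ ($x,y\in X$) is $\tau$-clopen, and each $w_1(y)$ and $w_2(y)$ ($y\in X$) is $\tau$-closed; (ii) if moreover $\tau$ is an inverse semigroup topology (inversion is continuous), then the inclusion relation $\{(f,g): f\subseteq g\}$ (as sets of ordered pairs) is closed in $I(X)\times I(X)$ if and only if every $w_1(x)$ is $\tau$-open; (iii) if $\tau$ is a Hausdorff topology making $I(X)$ a topological inverse semigroup, then $\tau_{pp}\subseteq\tau$.
   Context: $I(X)$ is the symmetric inverse semigroup on $X$: the set of all bijections $f:A\to B$ with $A,B\subseteq X$ (including the empty map); write $\mathrm{dom}(f)=A$, $\mathrm{im}(f)=B$. The product is composition: $\mathrm{dom}(f\circ g)=g^{-1}(\mathrm{dom}(f)\cap\mathrm{im}(g))$, $(f\circ g)(x)=f(g(x))$; inverse is $f^{-1}$. For $x,y\in X$: $v(x,y)=\{f: x\in\mathrm{dom}(f), f(x)=y\}$, $w_1(x)=\{f: x\notin\mathrm{dom}(f)\}$, $w_2(y)=\{f: y\notin\mathrm{im}(f)\}$. $\tau_{pp}$ is the topology on $I(X)$ generated by the subbasis of all sets $v(x,y)$, $w_1(x)$, $w_2(y)$. A topological semigroup has continuous multiplication; a topological inverse semigroup additionally has continuous inversion. *)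

theory Defs
  imports "HOL-Analysis.Analysis"
begin

text \<open>The symmetric inverse semigroup I(X) on X = UNIV :: 'a set: partial injections,
  represented as partial maps 'a \<rightharpoonup> 'a which are injective on their domain.
  A partial map is identified with its graph, so dom f and ran f are domain and image.\<close>

definition IX :: "('a \<rightharpoonup> 'a) set" where
  "IX = {f. inj_on f (dom f)}"

definition pmul :: "('a \<rightharpoonup> 'a) \<Rightarrow> ('a \<rightharpoonup> 'a) \<Rightarrow> ('a \<rightharpoonup> 'a)" where
  "pmul f g = f \<circ>\<^sub>m g"

definition pinv :: "('a \<rightharpoonup> 'a) \<Rightarrow> ('a \<rightharpoonup> 'a)" where
  "pinv f = (\<lambda>y. if y \<in> ran f then Some (THE x. f x = Some y) else None)"

definition v_set :: "'a \<Rightarrow> 'a \<Rightarrow> ('a \<rightharpoonup> 'a) set" where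
  "v_set x y = {f \<in> IX. f x = Some y}"

definition w1_set :: "'a \<Rightarrow> ('a \<rightharpoonup> 'a) set" where
  "w1_set x = {f \<in> IX. x \<notin> dom f}"

definition w2_set :: "'a \<Rightarrow> ('a \<rightharpoonup> 'a) set" where
  "w2_set y = {f \<in> IX. y \<notin> ran f}"

definition tau_pp :: "('a \<rightharpoonup> 'a) topology" where
  "tau_pp = topology_generated_by
     ((\<Union>x y. {v_set x y}) \<union> (\<Union>x. {w1_set x}) \<union> (\<Union>y. {w2_set y}))"

definition topological_semigroup_IX :: "('a \<rightharpoonup> 'a) topology \<Rightarrow> bool" where
  "topological_semigroup_IX \<tau> \<longleftrightarrow> topspace \<tau> = IX \<and>
     continuous_map (prod_topology \<tau> \<tau>) \<tau> (\<lambda>(f, g). pmul f g)"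

definition topological_inverse_semigroup_IX :: "('a \<rightharpoonup> 'a) topology \<Rightarrow> bool" where
  "topological_inverse_semigroup_IX \<tau> \<longleftrightarrow> topological_semigroup_IX \<tau> \<and>
     continuous_map \<tau> \<tau> pinv"

definition incl_rel :: "(('a \<rightharpoonup> 'a) \<times> ('a \<rightharpoonup> 'a)) set" where
  "incl_rel = {(f, g). f \<in> IX \<and> g \<in> IX \<and> f \<subseteq>\<^sub>m g}"

end

theory Submission
  imports Defs
begin

text \<open>The key identity is \<open>[y \<mapsto> y] \<circ> f \<circ> [x \<mapsto> x] = [x \<mapsto> y]\<close> if \<open>f x = y\<close>
  and \<open>= \<emptyset>\<close> otherwise: it exhibits \<open>v(x,y)\<close> and its complement as preimages of points
  under a continuous map, and similarly \<open>w\<^sub>1(x)\<close>, \<open>w\<^sub>2(y)\<close> are the preimages of \<open>\<emptyset>\<close> under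
  \<open>f \<mapsto> f \<circ> [x \<mapsto> x]\<close>, \<open>f \<mapsto> [y \<mapsto> y] \<circ> f\<close>; points are closed in a T1 space.
  Since \<open>f\<^sup>-\<^sup>1 f\<close> is the identity on \<open>dom f\<close>, \<open>w\<^sub>1(x)\<close> is the preimage of the complement of the
  inclusion relation under \<open>f \<mapsto> ([x \<mapsto> x], f\<^sup>-\<^sup>1 f)\<close>; conversely, if \<open>f \<not>\<subseteq> g\<close> then some
  \<open>f z = y\<close> differs from \<open>g z\<close>, and a box \<open>v(z,y) \<times> w\<^sub>1(z)\<close> or \<open>v(z,y) \<times> v(z,g z)\<close> separates
  \<open>(f, g)\<close> from the relation. In a Hausdorff space the relation \<open>f = g f\<^sup>-\<^sup>1 f\<close>, an equaliser of
  continuous maps, is closed, so every \<open>w\<^sub>1(x)\<close> is open, and then so is its preimage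
  \<open>w\<^sub>2(x)\<close> under inversion; hence every subbasic set of \<open>\<tau>\<^sub>p\<^sub>p\<close> is \<open>\<tau>\<close>-open.\<close>

lemma singleton_map_in_IX: "[x \<mapsto> y] \<in> IX"
  unfolding IX_def by (simp add: inj_on_def)

lemma empty_in_IX: "Map.empty \<in> IX"
  unfolding IX_def by simp

lemma restrict_Some_in_IX: "Some |` A \<in> IX"
  unfolding IX_def by (auto simp: inj_on_def restrict_map_def split: if_splits)

lemma pmul_idempotent_right: "pmul f [x \<mapsto> x] = (\<lambda>z. if z = x then f x else None)"
  unfolding pmul_def by (auto simp: map_comp_def)

lemma pmul_idempotent_left: "pmul [y \<mapsto> y] f = (\<lambda>z. if f z = Some y then Some y else None)"
  unfolding pmul_def by (rule ext) (auto simp: map_comp_def split: option.splits)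

lemma pmul_sandwich:
  "pmul [y \<mapsto> y] (pmul f [x \<mapsto> x]) = (if f x = Some y then [x \<mapsto> y] else Map.empty)"
  unfolding pmul_idempotent_right pmul_idempotent_left by (rule ext) auto

lemma pmul_idempotent_right_eq_empty_iff: "pmul f [x \<mapsto> x] = Map.empty \<longleftrightarrow> x \<notin> dom f"
  unfolding pmul_idempotent_right by (auto simp: fun_eq_iff)

lemma pmul_idempotent_left_eq_empty_iff: "pmul [y \<mapsto> y] f = Map.empty \<longleftrightarrow> y \<notin> ran f"
  unfolding pmul_idempotent_left by (auto simp: fun_eq_iff ran_def)

lemma pinv_apply_eq:
  assumes "f \<in> IX" and "f z = Some y"
  shows "pinv f y = Some z"
proof -
  have inj: "inj_on f (dom f)" using assms(1) unfolding IX_def by simp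
  have "(THE x. f x = Some y) = z"
  proof (rule the_equality)
    fix x assume "f x = Some y"
    then show "x = z" using assms(2) by (intro inj_onD[OF inj]) (auto simp: domIff)
  qed (fact assms(2))
  then show ?thesis using assms(2) by (simp add: pinv_def ranI)
qed

lemma pmul_pinv_self:
  assumes "f \<in> IX"
  shows "pmul (pinv f) f = Some |` dom f"
proof
  fix z show "pmul (pinv f) f z = (Some |` dom f) z"
    by (cases "f z") (auto simp: pmul_def restrict_map_def pinv_apply_eq[OF assms])
qed

lemma dom_pinv: "dom (pinv f) = ran f"
  unfolding pinv_def dom_def by simp

lemma map_le_iff_eq_pmul_pinv:
  "f \<in> IX \<Longrightarrow> f \<subseteq>\<^sub>m g \<longleftrightarrow> f = pmul g (pmul (pinv f) f)"
  unfolding pmul_pinv_self map_le_def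
  by (auto simp: pmul_def map_comp_def restrict_map_def fun_eq_iff dom_def split: option.splits)

lemma map_upd_self_le_restrict_Some_iff: "[x \<mapsto> x] \<subseteq>\<^sub>m Some |` A \<longleftrightarrow> x \<in> A"
  by (auto simp: map_le_def restrict_map_def)

context
  fixes \<tau> :: "('a \<rightharpoonup> 'a) topology"
  assumes semigroup: "topological_semigroup_IX \<tau>"
begin

lemma topspace_eq_IX: "topspace \<tau> = IX"
  using semigroup unfolding topological_semigroup_IX_def by blast

lemma continuous_map_pmul:
  assumes "continuous_map \<sigma> \<tau> F" and "continuous_map \<sigma> \<tau> G"
  shows "continuous_map \<sigma> \<tau> (\<lambda>p. pmul (F p) (G p))"
proof -
  have "continuous_map (prod_topology \<tau> \<tau>) \<tau> (\<lambda>(f, g). pmul f g)"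
    using semigroup unfolding topological_semigroup_IX_def by blast
  with assms have "continuous_map \<sigma> \<tau> ((\<lambda>(f, g). pmul f g) \<circ> (\<lambda>p. (F p, G p)))"
    by (intro continuous_map_compose) (simp_all add: continuous_map_paired)
  then show ?thesis by (simp add: o_def)
qed

lemma continuous_map_const_IX: "a \<in> IX \<Longrightarrow> continuous_map \<sigma> \<tau> (\<lambda>_. a)"
  by (simp add: topspace_eq_IX)

lemma closedin_preimage_singleton:
  assumes "t1_space \<tau>" and "continuous_map \<tau> \<tau> F" and "a \<in> IX"
  shows "closedin \<tau> {f \<in> IX. F f = a}"
proof -
  have "closedin \<tau> {a}"
    using assms(1,3) by (simp add: t1_space_closedin_singleton topspace_eq_IX)
  then have "closedin \<tau> {f \<in> topspace \<tau>. F f \<in> {a}}"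
    by (rule closedin_continuous_map_preimage[OF assms(2)])
  then show ?thesis by (simp add: topspace_eq_IX)
qed

lemma continuous_map_pmul_left: "a \<in> IX \<Longrightarrow> continuous_map \<tau> \<tau> (\<lambda>f. pmul a f)"
  by (intro continuous_map_pmul continuous_map_const_IX continuous_map_id[unfolded id_def])

lemma continuous_map_pmul_right: "a \<in> IX \<Longrightarrow> continuous_map \<tau> \<tau> (\<lambda>f. pmul f a)"
  by (intro continuous_map_pmul continuous_map_const_IX continuous_map_id[unfolded id_def])

lemma continuous_map_sandwich:
  "continuous_map \<tau> \<tau> (\<lambda>f. pmul [y \<mapsto> y] (pmul f [x \<mapsto> x]))"
  using continuous_map_compose[OF continuous_map_pmul_right continuous_map_pmul_left]
  by (simp add: o_def singleton_map_in_IX)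

context
  assumes T1: "t1_space \<tau>"
begin

lemma closedin_v_set: "closedin \<tau> (v_set x y)"
proof -
  have "v_set x y = {f \<in> IX. pmul [y \<mapsto> y] (pmul f [x \<mapsto> x]) = [x \<mapsto> y]}"
    by (auto simp: v_set_def pmul_sandwich fun_eq_iff)
  then show ?thesis
    by (simp add: closedin_preimage_singleton T1 continuous_map_sandwich singleton_map_in_IX)
qed

lemma openin_v_set: "openin \<tau> (v_set x y)"
proof -
  have "v_set x y = topspace \<tau> - {f \<in> IX. pmul [y \<mapsto> y] (pmul f [x \<mapsto> x]) = Map.empty}"
    by (auto simp: v_set_def topspace_eq_IX pmul_sandwich)
  then show ?thesis
    by (simp add: openin_diff closedin_preimage_singleton T1 continuous_map_sandwich empty_in_IX)
qed

lemma closedin_w1_set: "closedin \<tau> (w1_set x)"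
proof -
  have "w1_set x = {f \<in> IX. pmul f [x \<mapsto> x] = Map.empty}"
    by (auto simp: w1_set_def pmul_idempotent_right_eq_empty_iff)
  then show ?thesis
    using closedin_preimage_singleton[OF T1 continuous_map_pmul_right empty_in_IX]
    by (simp add: singleton_map_in_IX)
qed

lemma closedin_w2_set: "closedin \<tau> (w2_set y)"
proof -
  have "w2_set y = {f \<in> IX. pmul [y \<mapsto> y] f = Map.empty}"
    by (auto simp: w2_set_def pmul_idempotent_left_eq_empty_iff)
  then show ?thesis
    using closedin_preimage_singleton[OF T1 continuous_map_pmul_left empty_in_IX]
    by (simp add: singleton_map_in_IX)
qed

lemma closedin_incl_rel_if_openin_w1_set:
  assumes w1_open: "\<And>x. openin \<tau> (w1_set x)"
  shows "closedin (prod_topology \<tau> \<tau>) incl_rel"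
  unfolding closedin_def
proof
  show "incl_rel \<subseteq> topspace (prod_topology \<tau> \<tau>)"
    by (auto simp: incl_rel_def topspace_eq_IX)
  show "openin (prod_topology \<tau> \<tau>) (topspace (prod_topology \<tau> \<tau>) - incl_rel)"
  proof (subst openin_subopen, safe)
    fix f g assume fg: "(f, g) \<in> topspace (prod_topology \<tau> \<tau>)" "(f, g) \<notin> incl_rel"
    then have "f \<in> IX" "g \<in> IX" "\<not> f \<subseteq>\<^sub>m g"
      by (auto simp: incl_rel_def topspace_eq_IX)
    then obtain z y where z: "f z = Some y" "g z \<noteq> Some y"
      by (auto simp: map_le_def)
    define B where "B = v_set z y \<times> (case g z of None \<Rightarrow> w1_set z | Some u \<Rightarrow> v_set z u)"
    have "openin (prod_topology \<tau> \<tau>) B"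
      unfolding B_def by (auto simp: openin_prod_Times_iff openin_v_set w1_open split: option.split)
    moreover have "(f, g) \<in> B"
      using \<open>f \<in> IX\<close> \<open>g \<in> IX\<close> z
      by (auto simp: B_def v_set_def w1_set_def split: option.split)
    moreover have "B \<subseteq> topspace (prod_topology \<tau> \<tau>) - incl_rel"
      using z by (auto simp: B_def v_set_def w1_set_def incl_rel_def topspace_eq_IX map_le_def
          dom_def split: option.splits)
    ultimately show "\<exists>T. openin (prod_topology \<tau> \<tau>) T \<and> (f, g) \<in> T \<and>
        T \<subseteq> topspace (prod_topology \<tau> \<tau>) - incl_rel"
      by blast
  qed
qed

end

context
  assumes inversion: "continuous_map \<tau> \<tau> pinv"
begin

lemma openin_w1_set_if_closedin_incl_rel:
  assumes "closedin (prod_topology \<tau> \<tau>) incl_rel"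
  shows "openin \<tau> (w1_set x)"
proof -
  let ?\<psi> = "\<lambda>f. ([x \<mapsto> x], pmul (pinv f) f)"
  have "continuous_map \<tau> (prod_topology \<tau> \<tau>) ?\<psi>"
    unfolding continuous_map_paired
    by (simp add: continuous_map_pmul inversion topspace_eq_IX singleton_map_in_IX)
  then have "openin \<tau> {f \<in> topspace \<tau>. ?\<psi> f \<in> topspace (prod_topology \<tau> \<tau>) - incl_rel}"
    by (rule openin_continuous_map_preimage) (use assms in \<open>simp add: closedin_def\<close>)
  moreover have "w1_set x = {f \<in> topspace \<tau>. ?\<psi> f \<in> topspace (prod_topology \<tau> \<tau>) - incl_rel}"
    by (auto simp: w1_set_def incl_rel_def topspace_eq_IX pmul_pinv_self singleton_map_in_IX
        restrict_Some_in_IX map_upd_self_le_restrict_Some_iff)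
  ultimately show ?thesis by simp
qed

lemma openin_w2_set_if_openin_w1_set:
  assumes "openin \<tau> (w1_set y)"
  shows "openin \<tau> (w2_set y)"
proof -
  have "pinv f \<in> IX" if "f \<in> IX" for f :: "'a \<rightharpoonup> 'a"
    using inversion that by (auto simp: continuous_map_def topspace_eq_IX Pi_iff)
  then have "w2_set y = {f \<in> topspace \<tau>. pinv f \<in> w1_set y}"
    by (auto simp: w2_set_def w1_set_def topspace_eq_IX dom_pinv)
  then show ?thesis
    using openin_continuous_map_preimage[OF inversion assms] by simp
qed

lemma closedin_incl_rel_if_Hausdorff:
  assumes "Hausdorff_space \<tau>"
  shows "closedin (prod_topology \<tau> \<tau>) incl_rel"
proof -
  let ?P = "prod_topology \<tau> \<tau>"
  have "continuous_map ?P \<tau> (\<lambda>p. pmul (snd p) (pmul (pinv (fst p)) (fst p)))"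
    by (intro continuous_map_pmul continuous_map_snd continuous_map_fst
        continuous_map_compose[OF continuous_map_fst inversion, unfolded o_def])
  then have "closedin ?P {p \<in> topspace ?P. fst p = pmul (snd p) (pmul (pinv (fst p)) (fst p))}"
    by (rule closedin_continuous_maps_eq[OF assms continuous_map_fst])
  moreover have "{p \<in> topspace ?P. fst p = pmul (snd p) (pmul (pinv (fst p)) (fst p))} = incl_rel"
    by (auto simp: incl_rel_def topspace_eq_IX map_le_iff_eq_pmul_pinv)
  ultimately show ?thesis by simp
qed

end

end

lemma openin_tau_pp_imp_openin:
  fixes \<tau> :: "('a \<rightharpoonup> 'a) topology"
  assumes "\<And>x y. openin \<tau> (v_set x y)" and "\<And>x. openin \<tau> (w1_set x)"
    and "\<And>y. openin \<tau> (w2_set y)" and "openin tau_pp U"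
  shows "openin \<tau> U"
proof (rule generate_topology_on_coarsest)
  show "istopology (openin \<tau>)"
    by (simp add: istopology_def openin_Union openin_Int)
  show "generate_topology_on ((\<Union>x y. {v_set x y}) \<union> (\<Union>x. {w1_set x}) \<union> (\<Union>y. {w2_set y})) U"
    using assms(4) unfolding tau_pp_def by (simp add: openin_topology_generated_by_iff)
next
  fix S :: "('a \<rightharpoonup> 'a) set"
  assume "S \<in> (\<Union>x y. {v_set x y}) \<union> (\<Union>x. {w1_set x}) \<union> (\<Union>y. {w2_set y})"
  then show "openin \<tau> S" using assms(1-3) by blast
qed

theorem theorem3p3:
  fixes \<tau> :: "('a \<rightharpoonup> 'a) topology"
  assumes "topological_semigroup_IX \<tau>" and "t1_space \<tau>"
  shows "((\<forall>x y. openin \<tau> (v_set x y) \<and> closedin \<tau> (v_set x y)) \<and>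
          (\<forall>y. closedin \<tau> (w1_set y) \<and> closedin \<tau> (w2_set y)))
       \<and> (topological_inverse_semigroup_IX \<tau> \<longrightarrow>
           (closedin (prod_topology \<tau> \<tau>) incl_rel \<longleftrightarrow> (\<forall>x. openin \<tau> (w1_set x))))
       \<and> (Hausdorff_space \<tau> \<and> topological_inverse_semigroup_IX \<tau> \<longrightarrow>
           (\<forall>U. openin tau_pp U \<longrightarrow> openin \<tau> U))"
proof -
  have part_i: "(\<forall>x y. openin \<tau> (v_set x y) \<and> closedin \<tau> (v_set x y)) \<and>
      (\<forall>y. closedin \<tau> (w1_set y) \<and> closedin \<tau> (w2_set y))"
    by (intro conjI allI openin_v_set closedin_v_set closedin_w1_set closedin_w2_set assms)
  have part_ii: "topological_inverse_semigroup_IX \<tau> \<longrightarrow>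
      (closedin (prod_topology \<tau> \<tau>) incl_rel \<longleftrightarrow> (\<forall>x. openin \<tau> (w1_set x)))"
    unfolding topological_inverse_semigroup_IX_def
    using closedin_incl_rel_if_openin_w1_set[OF assms]
      openin_w1_set_if_closedin_incl_rel[OF assms(1)] by blast
  have part_iii: "Hausdorff_space \<tau> \<and> topological_inverse_semigroup_IX \<tau> \<longrightarrow>
      (\<forall>U. openin tau_pp U \<longrightarrow> openin \<tau> U)"
  proof (intro impI allI)
    assume "Hausdorff_space \<tau> \<and> topological_inverse_semigroup_IX \<tau>"
    then have "Hausdorff_space \<tau>" and inversion: "continuous_map \<tau> \<tau> pinv"
      by (simp_all add: topological_inverse_semigroup_IX_def)
    then have w1_open: "openin \<tau> (w1_set x)" for x
      by (simp add: openin_w1_set_if_closedin_incl_rel closedin_incl_rel_if_Hausdorff assms(1))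
    show "openin \<tau> U" if "openin tau_pp U" for U
      using openin_tau_pp_imp_openin[OF openin_v_set[OF assms] w1_open
          openin_w2_set_if_openin_w1_set[OF assms(1) inversion w1_open] that] .
  qed
  from part_i part_ii part_iii show ?thesis by blast
qed

end
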